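(* Let $c_1,c_2\in X_d$ with $|(c_1,c_2)|>1$. Then: (i) for each $A\in G_0^+$, $(Ac_1,Ac_2)\in\mathcal T_{2+}$; (ii) for each $A\in G_0^+$, $(Ac_1,Ac_2)\in\mathcal T_{2+}\cap\mathcal T_{2,(2,1)}$, where $\mathcal T_{2,(2,1)}=\{(z_1,z_2):(z_2,z_1)\in\mathcal T_{2+}\}$.
   Context: Let $d\ge2$. $E_{d+1}=\mathbb R^{d+1}$, $E^{(c)}_{d+1}=\mathbb C^{d+1}$ with bilinear form $(x,y)=x^0y^0+x^dy^d-\sum_{j=1}^{d-1}x^jy^j$. $X_d=\{x\in E_{d+1}:(x,x)=1\}$, $X_d^{(c)}=\{z\in E^{(c)}_{d+1}:(z,z)=1\}$. $G_0^{(c)}$ is the identity component of the complex group preserving the form; $\exp$ is the matrix exponential; $\ell(a\wedge b)x=a(b,x)-b(a,x)$. $\mathcal C_1=\{\ell(a\wedge b):a,b\in E_{d+1},(a,a)=(b,b)=1,(a,b)=0,a^0b^d-a^db^0>0\}$, $\mathcal C_+=\bigcup_{\rho>0}\rho\,\mathcal C_1$. $G_0^+\subset G_0^{(c)}$ is the set of finite products $\exp(\tau_1M_1)\cdots\exp(\tau_NM_N)$ with $\mathrm{Im}\,\tau_j>0$, $M_j\in\mathcal C_+$. $\mathcal T_{n+}=\{(z_1,\dots,z_n)\in(X_d^{(c)})^n:\ z_j=\Lambda_1\cdots\Lambda_jc_j\ \forall j,\ \Lambda_j\in G_0^+,\ c_j\in X_d\}$. *)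

theory Defs
  imports "HOL-Analysis.Analysis"
begin

text \<open>Coordinates are indexed by 0..d. Vectors of E_{d+1} (resp. its complexification)
  are functions nat => real (resp. complex) vanishing outside {0..d}; (d+1)x(d+1) matrices are
  functions nat => nat => complex vanishing outside {0..d} x {0..d}.\<close>

definition eta :: "nat \<Rightarrow> nat \<Rightarrow> real" where
  "eta d j = (if j = 0 \<or> j = d then 1 else -1)"

definition bform :: "nat \<Rightarrow> (nat \<Rightarrow> 'a::{real_algebra_1,comm_ring_1}) \<Rightarrow> (nat \<Rightarrow> 'a) \<Rightarrow> 'a" where
  "bform d x y = (\<Sum>j\<le>d. of_real (eta d j) * x j * y j)"

definition realvec :: "nat \<Rightarrow> (nat \<Rightarrow> real) set" where
  "realvec d = {x. \<forall>j>d. x j = 0}"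

definition Xd :: "nat \<Rightarrow> (nat \<Rightarrow> real) set" where
  "Xd d = {x \<in> realvec d. bform d x x = 1}"

definition Xdc :: "nat \<Rightarrow> (nat \<Rightarrow> complex) set" where
  "Xdc d = {z. (\<forall>j>d. z j = 0) \<and> bform d z z = 1}"

definition cvec :: "(nat \<Rightarrow> real) \<Rightarrow> nat \<Rightarrow> complex" where
  "cvec x = (\<lambda>j. complex_of_real (x j))"

definition mone :: "nat \<Rightarrow> nat \<Rightarrow> nat \<Rightarrow> complex" where
  "mone d = (\<lambda>i j. if i = j \<and> i \<le> d then 1 else 0)"

definition mmult :: "nat \<Rightarrow> (nat \<Rightarrow> nat \<Rightarrow> complex) \<Rightarrow> (nat \<Rightarrow> nat \<Rightarrow> complex) \<Rightarrow> nat \<Rightarrow> nat \<Rightarrow> complex" where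
  "mmult d A B = (\<lambda>i j. \<Sum>k\<le>d. A i k * B k j)"

definition mvec :: "nat \<Rightarrow> (nat \<Rightarrow> nat \<Rightarrow> complex) \<Rightarrow> (nat \<Rightarrow> complex) \<Rightarrow> nat \<Rightarrow> complex" where
  "mvec d A z = (\<lambda>i. \<Sum>k\<le>d. A i k * z k)"

fun mpow :: "nat \<Rightarrow> (nat \<Rightarrow> nat \<Rightarrow> complex) \<Rightarrow> nat \<Rightarrow> nat \<Rightarrow> nat \<Rightarrow> complex" where
  "mpow d A 0 = mone d"
| "mpow d A (Suc n) = mmult d A (mpow d A n)"

definition mexp :: "nat \<Rightarrow> (nat \<Rightarrow> nat \<Rightarrow> complex) \<Rightarrow> nat \<Rightarrow> nat \<Rightarrow> complex" where
  "mexp d A = (\<lambda>i j. \<Sum>n. mpow d A n i j / of_nat (fact n))"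

definition smult_mat :: "complex \<Rightarrow> (nat \<Rightarrow> nat \<Rightarrow> complex) \<Rightarrow> nat \<Rightarrow> nat \<Rightarrow> complex" where
  "smult_mat t A = (\<lambda>i j. t * A i j)"

text \<open>The matrix of ell(a wedge b): x |-> a (b,x) - b (a,x).\<close>
definition ell :: "nat \<Rightarrow> (nat \<Rightarrow> real) \<Rightarrow> (nat \<Rightarrow> real) \<Rightarrow> nat \<Rightarrow> nat \<Rightarrow> complex" where
  "ell d a b = (\<lambda>i j. if i \<le> d \<and> j \<le> d
      then complex_of_real (a i * eta d j * b j - b i * eta d j * a j) else 0)"

definition C1 :: "nat \<Rightarrow> (nat \<Rightarrow> nat \<Rightarrow> complex) set" where
  "C1 d = {ell d a b | a b. a \<in> realvec d \<and> b \<in> realvec d \<and> bform d a a = 1 \<and> bform d b b = 1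
      \<and> bform d a b = 0 \<and> a 0 * b d - a d * b 0 > 0}"

definition Cplus :: "nat \<Rightarrow> (nat \<Rightarrow> nat \<Rightarrow> complex) set" where
  "Cplus d = {smult_mat (complex_of_real \<rho>) M | \<rho> M. \<rho> > 0 \<and> M \<in> C1 d}"

definition mprod_list :: "nat \<Rightarrow> (nat \<Rightarrow> nat \<Rightarrow> complex) list \<Rightarrow> nat \<Rightarrow> nat \<Rightarrow> complex" where
  "mprod_list d Ms = foldr (mmult d) Ms (mone d)"

definition G0plus :: "nat \<Rightarrow> (nat \<Rightarrow> nat \<Rightarrow> complex) set" where
  "G0plus d = {mprod_list d (map (\<lambda>(t, M). mexp d (smult_mat t M)) ts) | ts.
      ts \<noteq> [] \<and> (\<forall>(t, M) \<in> set ts. Im t > 0 \<and> M \<in> Cplus d)}"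

definition Tplus :: "nat \<Rightarrow> nat \<Rightarrow> (nat \<Rightarrow> complex) list set" where
  "Tplus d n = {zs. length zs = n \<and> (\<forall>z \<in> set zs. z \<in> Xdc d) \<and>
      (\<exists>Ls cs. length Ls = n \<and> length cs = n \<and> set Ls \<subseteq> G0plus d \<and> set cs \<subseteq> Xd d \<and>
        (\<forall>j<n. zs ! j = mvec d (mprod_list d (take (Suc j) Ls)) (cvec (cs ! j))))}"

definition T2_21 :: "nat \<Rightarrow> ((nat \<Rightarrow> complex) \<times> (nat \<Rightarrow> complex)) set" where
  "T2_21 d = {(z1, z2). [z2, z1] \<in> Tplus d 2}"

end

theory Submission
  imports Defs
begin

(* Each generator exp (t \<rho> \<ell>(a\<and>b)) of G_0^+ acts as a complex rotation in the plane of a and b,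
   and it suffices to handle the last factor exp (\<tau> M) of A.  Rotate (a, b) in its plane so that
   a \<perp> c1, and write exp (\<tau> \<rho> \<ell>(a\<and>b)) = exp ((\<tau> \<rho> - i \<delta>) \<ell>(a\<and>b)) exp (i \<delta>1 \<ell>(a\<and>w)) R with
   R = exp (-i \<delta>1 \<ell>(a\<and>w)) exp (i \<delta> \<ell>(a\<and>b)), for a small \<delta> > 0, a second oriented plane (a, w),
   and \<delta>1 determined by requiring R c1 to be real.  As \<delta> \<rightarrow> 0, R c2 = X + i Y has X \<rightarrow> c2 and
   Y / \<delta> \<rightarrow> \<ell>(a\<and>b) c2 - N \<ell>(a\<and>w) c2, where \<delta>1 \<sim> N \<delta>.  Since |(c1, c2)| > 1, the component of
   c2 orthogonal to a and c1 is negative, and tilting b slightly in that direction yields a w for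
   which the limit is positive and positively oriented against c2.  Then R c2 lies in the tube that a
   single generator reaches from X_d, so A c1 = \<Lambda>1 c1' and A c2 = \<Lambda>1 \<Lambda>2 c2'. *)

lemma bform_sym: "bform d x y = bform d y x"
  unfolding bform_def by (rule sum.cong) (auto simp: ac_simps)

lemma bform_add_left: "bform d (\<lambda>j. x j + y j) z = bform d x z + bform d y z"
  unfolding bform_def by (simp add: algebra_simps sum.distrib)
lemma bform_diff_left: "bform d (\<lambda>j. x j - y j) z = bform d x z - bform d y z"
  unfolding bform_def by (simp add: algebra_simps sum_subtractf)
lemma bform_cmult_left: "bform d (\<lambda>j. c * x j) z = c * bform d x z"
  unfolding bform_def sum_distrib_left by (simp add: ac_simps)
lemma bform_multc_left: "bform d (\<lambda>j. x j * c) z = bform d x z * c"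
  unfolding bform_def sum_distrib_right by (simp add: ac_simps)
lemma bform_neg_left: "bform d (\<lambda>j. - x j) z = - bform d x z"
  unfolding bform_def by (simp add: sum_negf)
lemma bform_add_right: "bform d z (\<lambda>j. x j + y j) = bform d z x + bform d z y"
  unfolding bform_def by (simp add: algebra_simps sum.distrib)
lemma bform_diff_right: "bform d z (\<lambda>j. x j - y j) = bform d z x - bform d z y"
  unfolding bform_def by (simp add: algebra_simps sum_subtractf)
lemma bform_cmult_right: "bform d z (\<lambda>j. c * x j) = c * bform d z x"
  unfolding bform_def sum_distrib_left by (simp add: ac_simps)
lemma bform_multc_right: "bform d z (\<lambda>j. x j * c) = bform d z x * c"
  unfolding bform_def sum_distrib_right by (simp add: ac_simps)
lemma bform_neg_right: "bform d z (\<lambda>j. - x j) = - bform d z x"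
  unfolding bform_def by (simp add: sum_negf)
lemma bform_zero_right: "bform d z (\<lambda>_. 0) = 0"
  unfolding bform_def by simp

lemmas bform_linear = bform_add_left bform_diff_left bform_cmult_left bform_multc_left
  bform_neg_left bform_add_right bform_diff_right bform_cmult_right bform_multc_right
  bform_neg_right bform_zero_right

lemma bform_divide_left: "bform d (\<lambda>j. x j / c) y = bform d x y / c" for x y :: "nat \<Rightarrow> real"
  unfolding bform_def by (simp add: sum_divide_distrib)

lemma bform_divide_right: "bform d x (\<lambda>j. y j / c) = bform d x y / c" for x y :: "nat \<Rightarrow> real"
  unfolding bform_def by (simp add: sum_divide_distrib)

lemma bform_cvec: "bform d (cvec x) (cvec y) = complex_of_real (bform d x y)"
  unfolding bform_def cvec_def by simp

lemma tendsto_bform: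
  fixes x y :: "'a \<Rightarrow> nat \<Rightarrow> real"
  assumes "\<And>j. ((\<lambda>t. x t j) \<longlongrightarrow> x0 j) F" "\<And>j. ((\<lambda>t. y t j) \<longlongrightarrow> y0 j) F"
  shows "((\<lambda>t. bform d (x t) (y t)) \<longlongrightarrow> bform d x0 y0) F"
  unfolding bform_def by (intro tendsto_intros assms)

lemma cvec_support: "c \<in> realvec d \<Longrightarrow> \<forall>j>d. cvec c j = 0"
  unfolding realvec_def cvec_def by auto

lemma bform_cvec_Xd: "c \<in> Xd d \<Longrightarrow> bform d (cvec c) (cvec c) = 1"
  unfolding Xd_def by (simp add: bform_cvec)

section \<open>Signature of the form\<close>

definition orthonormal_pair :: "nat \<Rightarrow> (nat \<Rightarrow> real) \<Rightarrow> (nat \<Rightarrow> real) \<Rightarrow> bool" where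
  "orthonormal_pair d a b \<longleftrightarrow> a \<in> realvec d \<and> b \<in> realvec d \<and>
     bform d a a = 1 \<and> bform d b b = 1 \<and> bform d a b = 0"

definition orientation :: "nat \<Rightarrow> (nat \<Rightarrow> real) \<Rightarrow> (nat \<Rightarrow> real) \<Rightarrow> real" where
  "orientation d x y = x 0 * y d - x d * y 0"

lemma orthonormal_pairD:
  assumes "orthonormal_pair d a b"
  shows "a \<in> realvec d" "b \<in> realvec d" "bform d a a = 1" "bform d b b = 1"
    "bform d a b = 0" "bform d b a = 0"
  using assms unfolding orthonormal_pair_def by (auto simp: bform_sym)

lemma bform_self_nonpos:
  fixes x :: "nat \<Rightarrow> real"
  assumes "x 0 = 0" "x d = 0"
  shows "bform d x x \<le> 0"
  unfolding bform_def
proof (rule sum_nonpos)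
  fix j
  show "of_real (eta d j) * x j * x j \<le> 0"
    using assms by (cases "j = 0 \<or> j = d") (auto simp: eta_def)
qed

lemma orthogonal_to_pair_nonpos:
  assumes ab: "orthonormal_pair d a b" and ori: "orientation d a b \<noteq> 0"
    and xa: "bform d a x = 0" and xb: "bform d b x = 0"
  shows "bform d x x \<le> 0"
proof -
  define p where "p = b 0 * x d - b d * x 0"
  define q where "q = x 0 * a d - x d * a 0"
  define \<kappa> where "\<kappa> = orientation d a b"
  define u where "u = (\<lambda>j. p * a j + q * b j + \<kappa> * x j)"
  \<comment> \<open>the coefficients are 2x2 minors, chosen so that u vanishes at 0 and d\<close>
  have "u 0 = 0" "u d = 0" unfolding u_def p_def q_def \<kappa>_def orientation_def by algebra+
  then have "bform d u u \<le> 0" by (rule bform_self_nonpos)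
  moreover have "bform d x a = 0" "bform d x b = 0" using xa xb by (simp_all add: bform_sym)
  then have "bform d u u = p\<^sup>2 + q\<^sup>2 + \<kappa>\<^sup>2 * bform d x x"
    unfolding u_def using orthonormal_pairD[OF ab] xa xb
    by (simp add: bform_linear algebra_simps power2_eq_square)
  ultimately have "\<kappa>\<^sup>2 * bform d x x \<le> 0" by (smt (verit) zero_le_power2)
  moreover have "\<kappa>\<^sup>2 > 0" using ori unfolding \<kappa>_def by simp
  ultimately show ?thesis by (simp add: mult_le_0_iff)
qed

lemma orientation_nonzero:
  fixes u x :: "nat \<Rightarrow> real"
  assumes uu: "bform d u u > 0" and xx: "bform d x x > 0" and ux: "bform d u x = 0"
  shows "orientation d u x \<noteq> 0"
proof
  assume ori: "orientation d u x = 0"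
  have xu: "bform d x u = 0" using ux by (simp add: bform_sym)
  have combination: "bform d (\<lambda>j. p * u j - q * x j) (\<lambda>j. p * u j - q * x j)
      = p * p * bform d u u + q * q * bform d x x" for p q
    using ux xu by (simp add: bform_linear algebra_simps)
  have zero: "p = 0 \<and> q = 0" if "p * u 0 - q * x 0 = 0" "p * u d - q * x d = 0" for p q
  proof -
    have "p * p * bform d u u + q * q * bform d x x \<le> 0"
      using bform_self_nonpos[of "\<lambda>j. p * u j - q * x j" d] that combination by simp
    moreover have "p * p * bform d u u \<ge> 0" "q * q * bform d x x \<ge> 0" using uu xx by simp_all
    ultimately show ?thesis using uu xx by (smt (verit) mult_eq_0_iff mult_pos_pos zero_less_mult_iff)
  qed
  have "x 0 = 0 \<and> u 0 = 0" using zero[of "x 0" "u 0"] ori unfolding orientation_def by (simp add: algebra_simps)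
  moreover have "x d = 0 \<and> u d = 0" using zero[of "x d" "u d"] ori unfolding orientation_def by (simp add: algebra_simps)
  ultimately have "bform d u u \<le> 0" using bform_self_nonpos[of u d] by simp
  then show False using uu by simp
qed

lemma mvec_mmult: "mvec d (mmult d A B) z = mvec d A (mvec d B z)"
proof
  fix i
  have "mvec d (mmult d A B) z i = (\<Sum>k\<le>d. \<Sum>m\<le>d. A i m * B m k * z k)"
    unfolding mvec_def mmult_def by (simp add: sum_distrib_right)
  also have "\<dots> = (\<Sum>m\<le>d. \<Sum>k\<le>d. A i m * B m k * z k)" by (rule sum.swap)
  also have "\<dots> = mvec d A (mvec d B z) i"
    unfolding mvec_def by (simp add: sum_distrib_left mult.assoc)
  finally show "mvec d (mmult d A B) z i = mvec d A (mvec d B z) i" .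
qed

lemma mvec_mone:
  assumes "\<forall>j>d. z j = 0"
  shows "mvec d (mone d) z = z"
proof
  fix i
  have "mvec d (mone d) z i = (\<Sum>k\<le>d. if k = i then (if i \<le> d then z i else 0) else 0)"
    unfolding mvec_def mone_def by (rule sum.cong) auto
  also have "\<dots> = z i" using assms by (cases "i \<le> d") auto
  finally show "mvec d (mone d) z i = z i" .
qed

lemma mvec_smult_mat: "mvec d (smult_mat c A) z = (\<lambda>i. c * mvec d A z i)"
  unfolding mvec_def smult_mat_def by (simp add: sum_distrib_left mult.assoc)

lemma smult_mat_smult_mat: "smult_mat s (smult_mat t A) = smult_mat (s * t) A"
  unfolding smult_mat_def by (simp add: mult.assoc)

definition basis_vec :: "nat \<Rightarrow> nat \<Rightarrow> complex" where
  "basis_vec j = (\<lambda>k. if k = j then 1 else 0)"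

lemma mvec_basis_vec: "j \<le> d \<Longrightarrow> mvec d A (basis_vec j) i = A i j"
  unfolding mvec_def basis_vec_def by (simp add: if_distrib cong: if_cong)

section \<open>Rotations in an orthonormal plane\<close>

definition wedge_vec :: "nat \<Rightarrow> (nat \<Rightarrow> real) \<Rightarrow> (nat \<Rightarrow> real) \<Rightarrow> (nat \<Rightarrow> complex) \<Rightarrow> nat \<Rightarrow> complex" where
  "wedge_vec d a b z = (\<lambda>i. cvec a i * bform d (cvec b) z - cvec b i * bform d (cvec a) z)"

definition plane_proj :: "nat \<Rightarrow> (nat \<Rightarrow> real) \<Rightarrow> (nat \<Rightarrow> real) \<Rightarrow> (nat \<Rightarrow> complex) \<Rightarrow> nat \<Rightarrow> complex" where
  "plane_proj d a b z = (\<lambda>i. cvec a i * bform d (cvec a) z + cvec b i * bform d (cvec b) z)"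

text \<open>For orthonormal a, b the generator satisfies \<open>\<ell>\<^sup>2 = -P\<close> and \<open>\<ell> P = \<ell>\<close>, where P is the
  projection onto the plane of a and b; so \<open>exp (t \<ell>(a\<and>b))\<close> collapses to the following.\<close>
definition plane_rot :: "nat \<Rightarrow> (nat \<Rightarrow> real) \<Rightarrow> (nat \<Rightarrow> real) \<Rightarrow> complex \<Rightarrow> (nat \<Rightarrow> complex) \<Rightarrow> nat \<Rightarrow> complex" where
  "plane_rot d a b t z = (\<lambda>i. z i + sin t * wedge_vec d a b z i + (cos t - 1) * plane_proj d a b z i)"

lemma mvec_ell:
  assumes "a \<in> realvec d" "b \<in> realvec d"
  shows "mvec d (ell d a b) z = wedge_vec d a b z"
proof
  fix i
  show "mvec d (ell d a b) z i = wedge_vec d a b z i"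
  proof (cases "i \<le> d")
    case True
    then show ?thesis unfolding mvec_def ell_def wedge_vec_def bform_def cvec_def
      by (simp add: sum_distrib_left sum_subtractf[symmetric] algebra_simps)
  next
    case False
    then show ?thesis using assms unfolding mvec_def ell_def wedge_vec_def realvec_def cvec_def by auto
  qed
qed

lemma orthonormal_pair_cvec:
  assumes "orthonormal_pair d a b"
  shows "bform d (cvec a) (cvec a) = 1" "bform d (cvec b) (cvec b) = 1"
    "bform d (cvec a) (cvec b) = 0" "bform d (cvec b) (cvec a) = 0"
  using orthonormal_pairD[OF assms] by (simp_all add: bform_cvec)

lemma bform_wedge_vec_plane_proj:
  assumes "orthonormal_pair d a b"
  shows "bform d (cvec a) (wedge_vec d a b z) = bform d (cvec b) z"
    "bform d (cvec b) (wedge_vec d a b z) = - bform d (cvec a) z"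
    "bform d (cvec a) (plane_proj d a b z) = bform d (cvec a) z"
    "bform d (cvec b) (plane_proj d a b z) = bform d (cvec b) z"
  using orthonormal_pair_cvec[OF assms] unfolding wedge_vec_def plane_proj_def
  by (simp_all add: bform_linear)

lemma wedge_vec_wedge_vec:
  assumes "orthonormal_pair d a b"
  shows "wedge_vec d a b (wedge_vec d a b z) = (\<lambda>i. - plane_proj d a b z i)"
  unfolding wedge_vec_def[of d a b "wedge_vec d a b z"] bform_wedge_vec_plane_proj[OF assms]
  by (simp add: plane_proj_def algebra_simps)

lemma plane_proj_wedge_vec:
  assumes "orthonormal_pair d a b"
  shows "plane_proj d a b (wedge_vec d a b z) = wedge_vec d a b z"
  unfolding plane_proj_def[of d a b "wedge_vec d a b z"] bform_wedge_vec_plane_proj[OF assms]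
  by (simp add: wedge_vec_def algebra_simps)

lemma plane_proj_plane_proj:
  assumes "orthonormal_pair d a b"
  shows "plane_proj d a b (plane_proj d a b z) = plane_proj d a b z"
  unfolding plane_proj_def[of d a b "plane_proj d a b z"] bform_wedge_vec_plane_proj[OF assms]
  by (simp add: plane_proj_def)

lemma wedge_vec_scale: "wedge_vec d a b (\<lambda>i. c * z i) = (\<lambda>i. c * wedge_vec d a b z i)"
  unfolding wedge_vec_def by (simp add: bform_linear algebra_simps)
lemma plane_proj_scale: "plane_proj d a b (\<lambda>i. c * z i) = (\<lambda>i. c * plane_proj d a b z i)"
  unfolding plane_proj_def by (simp add: bform_linear algebra_simps)

lemma mvec_mpow_ell:
  fixes c :: complex
  assumes ab: "orthonormal_pair d a b" and z: "\<forall>j>d. z j = 0"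
  defines "K \<equiv> smult_mat c (ell d a b)"
  shows "mvec d (mpow d K (Suc (2*k))) z = (\<lambda>i. c^Suc (2*k) * (-1)^k * wedge_vec d a b z i)
       \<and> mvec d (mpow d K (Suc (Suc (2*k)))) z = (\<lambda>i. c^Suc (Suc (2*k)) * (-1)^Suc k * plane_proj d a b z i)"
proof -
  have step: "mvec d (mpow d K (Suc n)) z = (\<lambda>i. c * wedge_vec d a b (mvec d (mpow d K n) z) i)" for n
    unfolding K_def using orthonormal_pairD(1,2)[OF ab] by (simp add: mvec_mmult mvec_smult_mat mvec_ell)
  have step2: "mvec d (mpow d K (Suc (Suc n))) z = (\<lambda>i. - (c * c) * plane_proj d a b (mvec d (mpow d K n) z) i)" for n
    unfolding step wedge_vec_scale wedge_vec_wedge_vec[OF ab] by (simp add: algebra_simps)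
  show ?thesis
  proof (induction k)
    case 0
    show ?case unfolding step step2
      by (simp add: mvec_mone[OF z] wedge_vec_scale wedge_vec_wedge_vec[OF ab] mult.assoc)
  next
    case (Suc k)
    have e: "Suc (2 * Suc k) = Suc (Suc (Suc (2*k)))" "Suc (Suc (2 * Suc k)) = Suc (Suc (Suc (Suc (2*k))))"
      by simp_all
    show ?case
      unfolding e step2[of "Suc (2*k)"] step2[of "Suc (Suc (2*k))"] Suc.IH[THEN conjunct1] Suc.IH[THEN conjunct2] plane_proj_scale
        plane_proj_wedge_vec[OF ab] plane_proj_plane_proj[OF ab]
      by (simp add: algebra_simps)
  qed
qed

lemma mvec_mpow_ell_div_fact:
  fixes c :: complex
  assumes ab: "orthonormal_pair d a b" and z: "\<forall>j>d. z j = 0"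
  shows "mvec d (mpow d (smult_mat c (ell d a b)) n) z i / fact n = (if n = 0 then z i else 0)
     + complex_of_real (sin_coeff n) * c^n * wedge_vec d a b z i
     + (complex_of_real (cos_coeff n) * c^n - (if n = 0 then 1 else 0)) * plane_proj d a b z i"
proof -
  note powers = mvec_mpow_ell[OF ab z, of c]
  have "n = 0 \<or> (\<exists>k. n = Suc (2*k)) \<or> (\<exists>k. n = Suc (Suc (2*k)))" by presburger
  then consider "n = 0" | k where "n = Suc (2*k)" | k where "n = Suc (Suc (2*k))" by blast
  then show ?thesis
  proof cases
    case 1
    then show ?thesis by (simp add: mvec_mone[OF z] sin_coeff_def cos_coeff_def)
  next
    case (2 k)
    then have "sin_coeff n = (-1)^k / fact n" "cos_coeff n = 0"
      unfolding sin_coeff_def cos_coeff_def by auto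
    then show ?thesis using powers[of k] 2 by simp
  next
    case (3 k)
    then have "sin_coeff n = 0" "cos_coeff n = (-1)^Suc k / fact n"
      unfolding sin_coeff_def cos_coeff_def by auto
    then show ?thesis using powers[of k] 3 by simp
  qed
qed

lemma mvec_mpow_ell_sums:
  fixes c :: complex
  assumes ab: "orthonormal_pair d a b" and z: "\<forall>j>d. z j = 0"
  shows "(\<lambda>n. mvec d (mpow d (smult_mat c (ell d a b)) n) z i / fact n) sums plane_rot d a b c z i"
proof -
  have sin: "(\<lambda>n. complex_of_real (sin_coeff n) * c^n) sums sin c"
    using sin_converges[of c] by (simp add: scaleR_conv_of_real)
  have cos: "(\<lambda>n. complex_of_real (cos_coeff n) * c^n) sums cos c"
    using cos_converges[of c] by (simp add: scaleR_conv_of_real)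
  have "(\<lambda>n. if n = 0 then w else 0) sums w" for w :: complex
    using sums_single[of 0 "\<lambda>_. w"] by simp
  then have "(\<lambda>n. (if n = 0 then z i else 0)
     + complex_of_real (sin_coeff n) * c^n * wedge_vec d a b z i
     + (complex_of_real (cos_coeff n) * c^n - (if n = 0 then 1 else 0)) * plane_proj d a b z i)
     sums (z i + sin c * wedge_vec d a b z i + (cos c - 1) * plane_proj d a b z i)"
    by (intro sums_add sums_mult2 sums_diff sin cos)
  then show ?thesis unfolding plane_rot_def mvec_mpow_ell_div_fact[OF ab z] .
qed

lemma mvec_mexp_ell:
  fixes c :: complex
  assumes ab: "orthonormal_pair d a b" and z: "\<forall>j>d. z j = 0"
  shows "mvec d (mexp d (smult_mat c (ell d a b))) z = plane_rot d a b c z"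
proof
  fix i
  define K where "K = smult_mat c (ell d a b)"
  have entry: "mexp d K i j = plane_rot d a b c (basis_vec j) i" if "j \<le> d" for j
  proof -
    have "\<forall>k>d. basis_vec j k = 0" using that unfolding basis_vec_def by auto
    from mvec_mpow_ell_sums[OF ab this, of c i]
    have "(\<lambda>n. mpow d K n i j / fact n) sums plane_rot d a b c (basis_vec j) i"
      unfolding K_def mvec_basis_vec[OF that] .
    then show ?thesis unfolding mexp_def by (simp add: sums_iff)
  qed
  have basis: "bform d (cvec x) (basis_vec j) = complex_of_real (eta d j) * cvec x j" if "j \<le> d" for x j
    unfolding bform_def basis_vec_def using that by (simp add: if_distrib cong: if_cong)
  have "mvec d (mexp d K) z i = (\<Sum>j\<le>d. plane_rot d a b c (basis_vec j) i * z j)"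
    unfolding mvec_def by (rule sum.cong) (auto simp: entry)
  also have "\<dots> = (\<Sum>j\<le>d. basis_vec j i * z j
       + sin c * (cvec a i * (complex_of_real (eta d j) * cvec b j * z j)
                 - cvec b i * (complex_of_real (eta d j) * cvec a j * z j))
       + (cos c - 1) * (cvec a i * (complex_of_real (eta d j) * cvec a j * z j)
                 + cvec b i * (complex_of_real (eta d j) * cvec b j * z j)))"
    by (rule sum.cong) (auto simp: plane_rot_def wedge_vec_def plane_proj_def basis algebra_simps)
  also have "\<dots> = (\<Sum>j\<le>d. basis_vec j i * z j) + sin c * wedge_vec d a b z i
       + (cos c - 1) * plane_proj d a b z i"
    unfolding wedge_vec_def plane_proj_def bform_def
    by (simp add: sum.distrib sum_subtractf sum_distrib_left mult.assoc right_diff_distrib distrib_left)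
  also have "(\<Sum>j\<le>d. basis_vec j i * z j) = z i"
  proof -
    have "(\<Sum>j\<le>d. basis_vec j i * z j) = (\<Sum>j\<le>d. if j = i then z i else 0)"
      unfolding basis_vec_def by (rule sum.cong) auto
    then show ?thesis using z by (cases "i \<le> d") auto
  qed
  finally show "mvec d (mexp d (smult_mat c (ell d a b))) z i = plane_rot d a b c z i"
    unfolding K_def plane_rot_def .
qed

lemma bform_plane_rot:
  assumes "orthonormal_pair d a b"
  shows "bform d (cvec a) (plane_rot d a b t z) = cos t * bform d (cvec a) z + sin t * bform d (cvec b) z"
    "bform d (cvec b) (plane_rot d a b t z) = cos t * bform d (cvec b) z - sin t * bform d (cvec a) z"
  using bform_wedge_vec_plane_proj[OF assms] unfolding plane_rot_def
  by (simp_all add: bform_linear algebra_simps)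

lemma plane_rot_add:
  assumes "orthonormal_pair d a b"
  shows "plane_rot d a b s (plane_rot d a b t z) = plane_rot d a b (s + t) z"
proof
  fix i
  show "plane_rot d a b s (plane_rot d a b t z) i = plane_rot d a b (s + t) z i"
    unfolding plane_rot_def[of d a b s] wedge_vec_def plane_proj_def bform_plane_rot[OF assms]
    by (simp add: plane_rot_def wedge_vec_def plane_proj_def sin_add cos_add) algebra
qed

lemma plane_rot_zero: "plane_rot d a b 0 z = z"
  unfolding plane_rot_def by simp

lemma plane_rot_support:
  assumes "orthonormal_pair d a b" "\<forall>j>d. z j = 0"
  shows "\<forall>j>d. plane_rot d a b t z j = 0"
  using assms unfolding orthonormal_pair_def realvec_def plane_rot_def wedge_vec_def plane_proj_def cvec_def
  by auto

lemma bform_plane_rot_self: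
  assumes ab: "orthonormal_pair d a b"
  shows "bform d (plane_rot d a b t z) (plane_rot d a b t z) = bform d z z"
proof -
  define A where "A = bform d (cvec a) z"
  define B where "B = bform d (cvec b) z"
  have sym: "bform d z (cvec a) = A" "bform d z (cvec b) = B"
    unfolding A_def B_def by (simp_all add: bform_sym)
  have sin2: "sin t * sin t = 1 - cos t * cos t" using sin_cos_squared_add3[of t] by algebra
  show ?thesis
    unfolding plane_rot_def wedge_vec_def plane_proj_def A_def[symmetric] B_def[symmetric]
    by (simp add: bform_linear orthonormal_pair_cvec[OF ab] sym A_def[symmetric] B_def[symmetric]
        algebra_simps sin2)
qed

lemma sin_ii_of_real: "sin (\<i> * complex_of_real x) = \<i> * complex_of_real (sinh x)"
  by (simp add: sin_i_times sinh_def exp_of_real exp_minus field_simps)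

lemma cos_ii_of_real: "cos (\<i> * complex_of_real x) = complex_of_real (cosh x)"
  by (simp add: cos_i_times cosh_def exp_of_real exp_minus field_simps)

definition real_wedge :: "nat \<Rightarrow> (nat \<Rightarrow> real) \<Rightarrow> (nat \<Rightarrow> real) \<Rightarrow> (nat \<Rightarrow> real) \<Rightarrow> nat \<Rightarrow> real" where
  "real_wedge d a b x = (\<lambda>i. a i * bform d b x - b i * bform d a x)"

definition real_plane_proj :: "nat \<Rightarrow> (nat \<Rightarrow> real) \<Rightarrow> (nat \<Rightarrow> real) \<Rightarrow> (nat \<Rightarrow> real) \<Rightarrow> nat \<Rightarrow> real" where
  "real_plane_proj d a b x = (\<lambda>i. a i * bform d a x + b i * bform d b x)"

definition of_re_im :: "(nat \<Rightarrow> real) \<times> (nat \<Rightarrow> real) \<Rightarrow> nat \<Rightarrow> complex" where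
  "of_re_im p = (\<lambda>j. complex_of_real (fst p j) + \<i> * complex_of_real (snd p j))"

text \<open>Real and imaginary parts of \<open>plane_rot d a b (\<i> \<theta>)\<close> applied to \<open>x + \<i> y\<close>, where
  \<open>s = sinh \<theta>\<close> and \<open>c = cosh \<theta>\<close>.\<close>
definition hyp_rot :: "nat \<Rightarrow> (nat \<Rightarrow> real) \<Rightarrow> (nat \<Rightarrow> real) \<Rightarrow> real \<Rightarrow> real \<Rightarrow>
    (nat \<Rightarrow> real) \<times> (nat \<Rightarrow> real) \<Rightarrow> (nat \<Rightarrow> real) \<times> (nat \<Rightarrow> real)" where
  "hyp_rot d a b s c p =
     ((\<lambda>i. fst p i - s * real_wedge d a b (snd p) i + (c - 1) * real_plane_proj d a b (fst p) i),
      (\<lambda>i. snd p i + s * real_wedge d a b (fst p) i + (c - 1) * real_plane_proj d a b (snd p) i))"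

lemma cvec_eq_of_re_im: "cvec x = of_re_im (x, \<lambda>_. 0)"
  unfolding cvec_def of_re_im_def by simp

lemma bform_cvec_of_re_im:
  "bform d (cvec a) (of_re_im (x, y)) = complex_of_real (bform d a x) + \<i> * complex_of_real (bform d a y)"
  unfolding bform_def cvec_def of_re_im_def by (simp add: algebra_simps sum.distrib sum_distrib_left)

lemma plane_rot_ii_of_re_im:
  "plane_rot d a b (\<i> * complex_of_real \<theta>) (of_re_im p) = of_re_im (hyp_rot d a b (sinh \<theta>) (cosh \<theta>) p)"
proof -
  obtain x y where p: "p = (x, y)" by fastforce
  show ?thesis
    unfolding p plane_rot_def wedge_vec_def plane_proj_def bform_cvec_of_re_im sin_ii_of_real cos_ii_of_real
    by (auto simp: of_re_im_def hyp_rot_def real_wedge_def real_plane_proj_def cvec_def algebra_simps)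
qed

lemma hyp_rot_real:
  "hyp_rot d a b s c (x, \<lambda>_. 0) =
     (\<lambda>i. x i + (c - 1) * real_plane_proj d a b x i, \<lambda>i. s * real_wedge d a b x i)"
  unfolding hyp_rot_def real_wedge_def real_plane_proj_def by (simp add: bform_zero_right)

section \<open>Words in the generators of \<open>G\<^sub>0\<^sup>+\<close>\<close>

lemma CplusE:
  assumes "M \<in> Cplus d"
  obtains \<rho> a b where "\<rho> > 0" "orthonormal_pair d a b" "orientation d a b > 0"
    "M = smult_mat (complex_of_real \<rho>) (ell d a b)"
  using assms unfolding Cplus_def C1_def orthonormal_pair_def orientation_def by blast

lemma smult_ell_in_Cplus:
  assumes "\<rho> > 0" "orthonormal_pair d a b" "orientation d a b > 0"
  shows "smult_mat (complex_of_real \<rho>) (ell d a b) \<in> Cplus d"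
  using assms unfolding Cplus_def C1_def orthonormal_pair_def orientation_def by blast

lemma ell_in_Cplus:
  assumes "orthonormal_pair d a b" "orientation d a b > 0"
  shows "ell d a b \<in> Cplus d"
  using smult_ell_in_Cplus[OF zero_less_one assms] by (simp add: smult_mat_def)

definition G0plus_word :: "nat \<Rightarrow> (complex \<times> (nat \<Rightarrow> nat \<Rightarrow> complex)) list \<Rightarrow> bool" where
  "G0plus_word d ts \<longleftrightarrow> ts \<noteq> [] \<and> (\<forall>(t, M) \<in> set ts. Im t > 0 \<and> M \<in> Cplus d)"

definition word_mat :: "nat \<Rightarrow> (complex \<times> (nat \<Rightarrow> nat \<Rightarrow> complex)) list \<Rightarrow> nat \<Rightarrow> nat \<Rightarrow> complex" where
  "word_mat d ts = mprod_list d (map (\<lambda>(t, M). mexp d (smult_mat t M)) ts)"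

definition word_act :: "nat \<Rightarrow> (complex \<times> (nat \<Rightarrow> nat \<Rightarrow> complex)) list \<Rightarrow> (nat \<Rightarrow> complex) \<Rightarrow> nat \<Rightarrow> complex" where
  "word_act d ts z = foldr (\<lambda>(t, M) w. mvec d (mexp d (smult_mat t M)) w) ts z"

lemma G0plus_iff_word: "A \<in> G0plus d \<longleftrightarrow> (\<exists>ts. G0plus_word d ts \<and> A = word_mat d ts)"
  unfolding G0plus_def G0plus_word_def word_mat_def by blast

lemma word_act_Nil [simp]: "word_act d [] z = z"
  unfolding word_act_def by simp

lemma word_act_Cons [simp]: "word_act d ((t, M) # ts) z = mvec d (mexp d (smult_mat t M)) (word_act d ts z)"
  unfolding word_act_def by simp

lemma word_act_append: "word_act d (ts @ us) z = word_act d ts (word_act d us z)"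
  unfolding word_act_def by simp

lemma mvec_word_mat:
  assumes "\<forall>j>d. z j = 0"
  shows "mvec d (word_mat d ts) z = word_act d ts z"
proof (induction ts)
  case Nil
  then show ?case using assms by (simp add: word_mat_def mprod_list_def mvec_mone)
next
  case (Cons tM ts)
  then show ?case by (cases tM) (simp add: word_mat_def mprod_list_def mvec_mmult)
qed

lemma word_act_Cplus:
  assumes "\<forall>(t, M) \<in> set ts. M \<in> Cplus d" "\<forall>j>d. z j = 0"
  shows "(\<forall>j>d. word_act d ts z j = 0) \<and> bform d (word_act d ts z) (word_act d ts z) = bform d z z"
  using assms(1)
proof (induction ts)
  case Nil
  then show ?case using assms(2) by simp
next
  case (Cons tM ts)
  obtain t M where tM: "tM = (t, M)" by fastforce
  obtain \<rho> a b where ab: "orthonormal_pair d a b" and M: "M = smult_mat (complex_of_real \<rho>) (ell d a b)"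
    using Cons.prems tM by (auto elim: CplusE)
  have IH: "(\<forall>j>d. word_act d ts z j = 0) \<and> bform d (word_act d ts z) (word_act d ts z) = bform d z z"
    using Cons by auto
  show ?case
    unfolding tM M word_act_Cons smult_mat_smult_mat mvec_mexp_ell[OF ab IH[THEN conjunct1]]
    using plane_rot_support[OF ab] bform_plane_rot_self[OF ab] IH by simp
qed

lemma word_act_ell:
  assumes "orthonormal_pair d a b" "\<forall>j>d. z j = 0"
  shows "word_act d [(t, smult_mat (complex_of_real \<rho>) (ell d a b))] z = plane_rot d a b (t * complex_of_real \<rho>) z"
  using mvec_mexp_ell[OF assms] by (simp add: smult_mat_smult_mat)

text \<open>Representation of a pair \<open>(z\<^sub>1, z\<^sub>2)\<close> as \<open>(\<Lambda>\<^sub>1 c\<^sub>1, \<Lambda>\<^sub>1 \<Lambda>\<^sub>2 c\<^sub>2)\<close>, with the \<open>\<Lambda>\<^sub>j\<close> given as words.\<close>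
definition Tplus2_rep :: "nat \<Rightarrow> (nat \<Rightarrow> complex) \<Rightarrow> (nat \<Rightarrow> complex) \<Rightarrow> bool" where
  "Tplus2_rep d z1 z2 \<longleftrightarrow> (\<exists>ts1 ts2 c1 c2. G0plus_word d ts1 \<and> G0plus_word d ts2 \<and>
     c1 \<in> Xd d \<and> c2 \<in> Xd d \<and> z1 = word_act d ts1 (cvec c1) \<and> z2 = word_act d ts1 (word_act d ts2 (cvec c2)))"

lemma Tplus2_rep_word_act:
  assumes "\<forall>(t, M) \<in> set ts. Im t > 0 \<and> M \<in> Cplus d" "Tplus2_rep d z1 z2"
  shows "Tplus2_rep d (word_act d ts z1) (word_act d ts z2)"
proof -
  obtain ts1 ts2 c1 c2 where rep: "G0plus_word d ts1" "G0plus_word d ts2" "c1 \<in> Xd d" "c2 \<in> Xd d"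
    "z1 = word_act d ts1 (cvec c1)" "z2 = word_act d ts1 (word_act d ts2 (cvec c2))"
    using assms(2) unfolding Tplus2_rep_def by blast
  have "G0plus_word d (ts @ ts1)" using assms(1) rep(1) unfolding G0plus_word_def by auto
  then show ?thesis unfolding Tplus2_rep_def using rep by (metis word_act_append)
qed

lemma Tplus2_rep_imp_Tplus:
  assumes "Tplus2_rep d z1 z2"
  shows "[z1, z2] \<in> Tplus d 2"
proof -
  obtain ts1 ts2 c1 c2 where rep: "G0plus_word d ts1" "G0plus_word d ts2" "c1 \<in> Xd d" "c2 \<in> Xd d"
    and z1: "z1 = word_act d ts1 (cvec c1)" and z2: "z2 = word_act d ts1 (word_act d ts2 (cvec c2))"
    using assms unfolding Tplus2_rep_def by blast
  have Cplus: "\<forall>(t, M) \<in> set ts1. M \<in> Cplus d" "\<forall>(t, M) \<in> set ts2. M \<in> Cplus d"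
    using rep(1,2) unfolding G0plus_word_def by auto
  have supp: "\<forall>j>d. cvec c1 j = 0" "\<forall>j>d. cvec c2 j = 0"
    using rep(3,4) cvec_support unfolding Xd_def by auto
  note act2 = word_act_Cplus[OF Cplus(2) supp(2)]
  note act1 = word_act_Cplus[OF Cplus(1) supp(1)] word_act_Cplus[OF Cplus(1) act2[THEN conjunct1]]
  define L1 where "L1 = word_mat d ts1"
  define L2 where "L2 = word_mat d ts2"
  have "L1 \<in> G0plus d" "L2 \<in> G0plus d" unfolding L1_def L2_def G0plus_iff_word using rep(1,2) by auto
  moreover have "z1 \<in> Xdc d" "z2 \<in> Xdc d"
    unfolding Xdc_def z1 z2 using act1 act2 bform_cvec_Xd rep(3,4) by auto
  moreover have "z1 = mvec d (mprod_list d (take 1 [L1, L2])) (cvec c1)"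
    unfolding z1 L1_def by (simp add: mprod_list_def mvec_mmult mvec_mone supp mvec_word_mat)
  moreover have "z2 = mvec d (mprod_list d (take 2 [L1, L2])) (cvec c2)"
    unfolding z2 L1_def L2_def
    by (simp add: mprod_list_def mvec_mmult mvec_mone supp mvec_word_mat act2[THEN conjunct1])
  ultimately show ?thesis unfolding Tplus_def using rep(3,4)
    by (auto intro!: exI[of _ "[L1, L2]"] exI[of _ "[c1, c2]"] simp: less_Suc_eq numeral_2_eq_2)
qed

definition forward_tube :: "nat \<Rightarrow> ((nat \<Rightarrow> real) \<times> (nat \<Rightarrow> real)) set" where
  "forward_tube d = {(X, Y). bform d Y Y > 0 \<and> orientation d Y X > 0}"

text \<open>On \<open>X\<^sub>d\<^sup>(\<^sup>c\<^sup>)\<close> the tube is reached from \<open>X\<^sub>d\<close> by a single generator: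
  \<open>X + \<i> Y = exp (\<i> \<sigma> \<ell>(Y/|Y| \<and> X/|X|)) (X/|X|)\<close> with \<open>sinh \<sigma> = |Y|\<close>.\<close>
lemma forward_tube_word_act:
  assumes real: "X \<in> realvec d" "Y \<in> realvec d"
    and on_Xdc: "bform d X X - bform d Y Y = 1" "bform d X Y = 0"
    and tube: "(X, Y) \<in> forward_tube d"
  obtains ts c where "G0plus_word d ts" "c \<in> Xd d" "word_act d ts (cvec c) = of_re_im (X, Y)"
proof -
  have YY: "bform d Y Y > 0" and ori: "orientation d Y X > 0" using tube unfolding forward_tube_def by auto
  define nY where "nY = sqrt (bform d Y Y)"
  define nX where "nX = sqrt (bform d X X)"
  have XX: "bform d X X = 1 + bform d Y Y" using on_Xdc by simp
  have pos: "nY > 0" "nX > 0" unfolding nY_def nX_def using XX YY by simp_all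
  have sq: "nY\<^sup>2 = bform d Y Y" "nX\<^sup>2 = bform d X X" unfolding nY_def nX_def using XX YY by simp_all
  define a where "a = (\<lambda>j. Y j / nY)"
  define b where "b = (\<lambda>j. X j / nX)"
  define \<sigma> where "\<sigma> = arsinh nY"
  have sinh: "sinh \<sigma> = nY" unfolding \<sigma>_def by simp
  have cosh: "cosh \<sigma> = nX"
    unfolding \<sigma>_def cosh_arsinh_real using sq XX pos by (simp add: real_sqrt_unique)
  have ab: "orthonormal_pair d a b" unfolding orthonormal_pair_def
  proof (intro conjI)
    show "a \<in> realvec d" "b \<in> realvec d" using real unfolding a_def b_def realvec_def by auto
    show "bform d a a = 1" "bform d b b = 1" "bform d a b = 0"
      unfolding a_def b_def bform_divide_left bform_divide_right
      using sq pos on_Xdc(2) YY XX bform_sym[of d Y X] by (simp_all add: power2_eq_square)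
  qed
  have "orientation d a b = orientation d Y X / (nY * nX)"
    unfolding orientation_def a_def b_def using pos by (simp add: field_simps)
  then have "orientation d a b > 0" using ori pos by simp
  then have "ell d a b \<in> Cplus d" by (rule ell_in_Cplus[OF ab])
  moreover have "\<sigma> > 0" unfolding \<sigma>_def using pos by simp
  ultimately have word: "G0plus_word d [(\<i> * complex_of_real \<sigma>, ell d a b)]" unfolding G0plus_word_def by simp
  have b: "b \<in> Xd d" using ab unfolding Xd_def orthonormal_pair_def by simp
  have "word_act d [(\<i> * complex_of_real \<sigma>, ell d a b)] (cvec b) = plane_rot d a b (\<i> * complex_of_real \<sigma>) (cvec b)"
    using mvec_mexp_ell[OF ab cvec_support] b unfolding Xd_def by simp
  also have "\<dots> = of_re_im (X, Y)"
    unfolding cvec_eq_of_re_im plane_rot_ii_of_re_im hyp_rot_real sinh cosh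
    using orthonormal_pairD[OF ab] pos
    by (simp add: real_wedge_def real_plane_proj_def a_def b_def field_simps)
  finally show ?thesis using that word b by blast
qed

section \<open>Choice of the planes\<close>

lemma orthonormal_pair_rotate:
  assumes ab: "orthonormal_pair d a b" and pq: "p\<^sup>2 + q\<^sup>2 = 1"
  defines "a' \<equiv> \<lambda>j. p * a j - q * b j" and "b' \<equiv> \<lambda>j. q * a j + p * b j"
  shows "orthonormal_pair d a' b'" "orientation d a' b' = orientation d a b" "ell d a' b' = ell d a b"
proof -
  note O = orthonormal_pairD[OF ab]
  show "orthonormal_pair d a' b'" unfolding orthonormal_pair_def
  proof (intro conjI)
    show "a' \<in> realvec d" "b' \<in> realvec d" using O(1,2) unfolding a'_def b'_def realvec_def by auto
    show "bform d a' a' = 1" "bform d b' b' = 1" "bform d a' b' = 0"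
      unfolding a'_def b'_def using O pq by (simp_all add: bform_linear algebra_simps power2_eq_square)
  qed
  show "orientation d a' b' = orientation d a b"
    using pq unfolding orientation_def a'_def b'_def power2_eq_square by algebra
  show "ell d a' b' = ell d a b"
  proof (intro ext)
    fix i j
    have "a' i * eta d j * b' j - b' i * eta d j * a' j = a i * eta d j * b j - b i * eta d j * a j"
      using pq unfolding a'_def b'_def power2_eq_square by algebra
    then show "ell d a' b' i j = ell d a b i j" unfolding ell_def by simp
  qed
qed

lemma rotate_pair_orthogonal:
  assumes ab: "orthonormal_pair d a0 b0" "orientation d a0 b0 > 0" and c: "c \<in> Xd d"
  obtains a b \<gamma> where "orthonormal_pair d a b" "orientation d a b > 0" "ell d a b = ell d a0 b0"
    "bform d a c = 0" "bform d b c = \<gamma>" "\<gamma> > 0"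
proof -
  define A where "A = bform d a0 c"
  define B where "B = bform d b0 c"
  have "A\<^sup>2 + B\<^sup>2 > 0"
  proof (rule ccontr)
    assume "\<not> A\<^sup>2 + B\<^sup>2 > 0"
    then have "A = 0" "B = 0" by (simp_all add: sum_power2_gt_zero_iff)
    then have "bform d c c \<le> 0" using orthogonal_to_pair_nonpos[OF ab(1)] ab(2) unfolding A_def B_def by simp
    then show False using c unfolding Xd_def by simp
  qed
  define \<gamma> where "\<gamma> = sqrt (A\<^sup>2 + B\<^sup>2)"
  have \<gamma>: "\<gamma> > 0" "\<gamma>\<^sup>2 = A\<^sup>2 + B\<^sup>2" unfolding \<gamma>_def using \<open>A\<^sup>2 + B\<^sup>2 > 0\<close> by simp_all
  define p where "p = B / \<gamma>"
  define q where "q = A / \<gamma>"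
  have "p\<^sup>2 + q\<^sup>2 = (A\<^sup>2 + B\<^sup>2) / \<gamma>\<^sup>2" unfolding p_def q_def by (simp add: power_divide add_divide_distrib)
  then have pq: "p\<^sup>2 + q\<^sup>2 = 1" using \<gamma>(1) by (simp add: \<gamma>(2)[symmetric])
  note rot = orthonormal_pair_rotate[OF ab(1) pq]
  show ?thesis
  proof (rule that[OF rot(1)])
    show "orientation d (\<lambda>j. p * a0 j - q * b0 j) (\<lambda>j. q * a0 j + p * b0 j) > 0" using rot(2) ab(2) by simp
    show "ell d (\<lambda>j. p * a0 j - q * b0 j) (\<lambda>j. q * a0 j + p * b0 j) = ell d a0 b0" by (rule rot(3))
    have "bform d (\<lambda>j. p * a0 j - q * b0 j) c = p * A - q * B"
      "bform d (\<lambda>j. q * a0 j + p * b0 j) c = q * A + p * B"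
      by (simp_all add: bform_linear A_def B_def)
    moreover have "p * A - q * B = 0" "q * A + p * B = \<gamma>"
      unfolding p_def q_def using \<gamma> by (simp_all add: field_simps power2_eq_square)
    ultimately show "bform d (\<lambda>j. p * a0 j - q * b0 j) c = 0" "bform d (\<lambda>j. q * a0 j + p * b0 j) c = \<gamma>"
      by simp_all
  qed (use \<gamma> in simp)
qed

lemma orthogonal_component_negative:
  assumes a: "bform d a a = 1" and c: "c1 \<in> Xd d" "c2 \<in> Xd d" and ac1: "bform d a c1 = 0"
    and far: "\<bar>bform d c1 c2\<bar> > 1"
  defines "r \<equiv> \<lambda>j. c2 j - bform d a c2 * a j - bform d c1 c2 * c1 j"
  shows "bform d a r = 0" "bform d c1 r = 0" "bform d r c2 = bform d r r"
    "(bform d a c2)\<^sup>2 + bform d r r < 0"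
proof -
  define \<alpha> where "\<alpha> = bform d a c2"
  define t where "t = bform d c1 c2"
  have c11: "bform d c1 c1 = 1" and c22: "bform d c2 c2 = 1" using c unfolding Xd_def by auto
  have sym: "bform d c1 a = 0" "bform d c2 a = \<alpha>" "bform d c2 c1 = t"
    unfolding \<alpha>_def t_def using ac1 by (simp_all add: bform_sym)
  show ra: "bform d a r = 0" and rc1: "bform d c1 r = 0"
    unfolding r_def using a ac1 c11 sym by (simp_all add: bform_linear \<alpha>_def[symmetric] t_def[symmetric])
  have "bform d r c2 = 1 - \<alpha>\<^sup>2 - t\<^sup>2"
    unfolding r_def using c22 sym by (simp add: bform_linear \<alpha>_def[symmetric] t_def[symmetric] power2_eq_square)
  moreover have "bform d r r = bform d r c2 - \<alpha> * bform d r a - t * bform d r c1"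
    by (subst (2) r_def) (simp add: bform_linear \<alpha>_def[symmetric] t_def[symmetric])
  then have "bform d r r = bform d r c2" using ra rc1 by (simp add: bform_sym[of d r a] bform_sym[of d r c1])
  moreover have "t\<^sup>2 > 1" using one_less_power[OF far, of 2] unfolding t_def by simp
  ultimately show "bform d r c2 = bform d r r" "(bform d a c2)\<^sup>2 + bform d r r < 0"
    unfolding \<alpha>_def[symmetric] by linarith+
qed

lemma exists_small_eps:
  fixes \<kappa> p q u v :: real
  assumes "\<kappa> \<noteq> 0" "u > 0"
  obtains \<epsilon> where "\<epsilon> * \<kappa> > 0" "1 + 2 * \<epsilon> * p + \<epsilon>\<^sup>2 * q > 0" "u + \<epsilon> * v > 0"
proof -
  define f where "f = (\<lambda>\<eta>. 1 + 2 * (sgn \<kappa> * \<eta>) * p + (sgn \<kappa> * \<eta>)\<^sup>2 * q)"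
  define g where "g = (\<lambda>\<eta>. u + sgn \<kappa> * \<eta> * v)"
  have lim: "(f \<longlongrightarrow> 1) (at_right 0)" "(g \<longlongrightarrow> u) (at_right 0)"
    unfolding f_def g_def by (auto intro!: tendsto_eq_intros)
  have "\<forall>\<^sub>F \<eta> in at_right 0. 0 < f \<eta>" "\<forall>\<^sub>F \<eta> in at_right 0. 0 < g \<eta>"
    using order_tendstoD(1)[OF lim(1), of 0] order_tendstoD(1)[OF lim(2), of 0] assms(2) by simp_all
  moreover have "\<forall>\<^sub>F \<eta> in at_right (0::real). 0 < \<eta>" by (simp add: eventually_at_right_less)
  ultimately have "\<forall>\<^sub>F \<eta> in at_right 0. 0 < \<eta> \<and> 0 < f \<eta> \<and> 0 < g \<eta>" by eventually_elim simp
  then obtain \<eta> where "0 < \<eta>" "0 < f \<eta>" "0 < g \<eta>"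
    using eventually_happens'[OF trivial_limit_at_right_real] by blast
  moreover have "sgn \<kappa> * \<eta> * \<kappa> > 0"
    using \<open>0 < \<eta>\<close> assms(1) by (cases "\<kappa> > 0") (auto simp: mult_neg_neg mult_pos_neg)
  ultimately show ?thesis using that[of "sgn \<kappa> * \<eta>"] unfolding f_def g_def by simp
qed

lemma orthonormal_pair_normalize:
  assumes "a \<in> realvec d" "bform d a a = 1" "W \<in> realvec d" "bform d a W = 0" "bform d W W > 0"
  shows "orthonormal_pair d a (\<lambda>j. W j / sqrt (bform d W W))"
  unfolding orthonormal_pair_def using assms
  by (simp add: bform_divide_left bform_divide_right realvec_def)

lemma real_wedge_tilt:
  assumes "\<And>j. N * w j = b j + \<epsilon> * r j"
  shows "real_wedge d a b c i - N * real_wedge d a w c i = \<epsilon> * (bform d a c * r i - bform d r c * a i)"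
proof -
  have "N * bform d w c = bform d b c + \<epsilon> * bform d r c"
    using bform_cmult_left[of d N w c] unfolding assms by (simp add: bform_linear)
  moreover have "real_wedge d a b c i - N * real_wedge d a w c i
      = a i * bform d b c - b i * bform d a c - a i * (N * bform d w c) + (N * w i) * bform d a c"
    unfolding real_wedge_def by (simp add: algebra_simps)
  ultimately show ?thesis unfolding assms by (simp add: algebra_simps)
qed

text \<open>The second plane \<open>(a, w)\<close> is chosen so that the tangent direction at \<open>\<delta> = 0\<close> of the imaginary part
  of \<open>exp (-\<i> \<delta>\<^sub>1 \<ell>(a\<and>w)) exp (\<i> \<delta> \<ell>(a\<and>b)) c\<^sub>2\<close>, with \<open>\<delta>\<^sub>1 \<approx> N \<delta>\<close>, lies in the tube.
  It is \<open>\<epsilon> v\<close> for a positive \<open>v \<perp> c\<^sub>2\<close> built from the negative component r of \<open>c\<^sub>2\<close>.\<close>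
lemma second_plane_exists:
  assumes ab: "orthonormal_pair d a b" "orientation d a b > 0"
    and c1: "c1 \<in> Xd d" "bform d a c1 = 0" "bform d b c1 = \<gamma>"
    and c2: "c2 \<in> Xd d" and far: "\<bar>bform d c1 c2\<bar> > 1"
  obtains w N where "orthonormal_pair d a w" "orientation d a w > 0" "N > 0" "bform d w c1 = \<gamma> / N"
    "(c2, \<lambda>i. real_wedge d a b c2 i - N * real_wedge d a w c2 i) \<in> forward_tube d"
proof -
  note O = orthonormal_pairD[OF ab(1)]
  have c2r: "c2 \<in> realvec d" "bform d c2 c2 = 1" using c2 unfolding Xd_def by auto
  define \<alpha> where "\<alpha> = bform d a c2"
  define r where "r = (\<lambda>j. c2 j - bform d a c2 * a j - bform d c1 c2 * c1 j)"
  define rr where "rr = bform d r r"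
  note r = orthogonal_component_negative[OF O(3) c1(1) c2 c1(2) far, folded r_def rr_def]
  have rreal: "r \<in> realvec d" using O(1) c1(1) c2r(1) unfolding r_def Xd_def realvec_def by auto
  define v where "v = (\<lambda>j. \<alpha> * r j - rr * a j)"
  have "bform d v v = rr * (\<alpha>\<^sup>2 + rr)"
    unfolding v_def using O r(1)
    by (simp add: bform_linear bform_sym[of d r a] rr_def[symmetric] algebra_simps power2_eq_square)
  moreover have "rr < 0" using r(4) zero_le_power2[of \<alpha>] unfolding \<alpha>_def[symmetric] by linarith
  ultimately have vv: "bform d v v > 0" using r(4) unfolding \<alpha>_def[symmetric] by (simp add: mult_neg_neg)
  have vc2: "bform d v c2 = 0"
    unfolding v_def using r(3) by (simp add: bform_linear \<alpha>_def[symmetric])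
  have "orientation d v c2 \<noteq> 0" using orientation_nonzero[OF vv _ vc2] c2r(2) by simp
  then obtain \<epsilon> where eps: "\<epsilon> * orientation d v c2 > 0" "1 + 2 * \<epsilon> * bform d b r + \<epsilon>\<^sup>2 * rr > 0"
    "orientation d a b + \<epsilon> * orientation d a r > 0"
    using exists_small_eps ab(2) by blast
  define W where "W = (\<lambda>j. b j + \<epsilon> * r j)"
  have "bform d W W = 1 + 2 * \<epsilon> * bform d b r + \<epsilon>\<^sup>2 * rr"
    unfolding W_def using O
    by (simp add: bform_linear rr_def[symmetric] bform_sym[of d r b] power2_eq_square algebra_simps)
  then have WW: "bform d W W > 0" using eps(2) by simp
  define N where "N = sqrt (bform d W W)"
  define w where "w = (\<lambda>j. W j / N)"
  have N: "N > 0" unfolding N_def using WW by simp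
  have Nw: "N * w j = b j + \<epsilon> * r j" for j unfolding w_def W_def using N by simp
  have "W \<in> realvec d" "bform d a W = 0" using O(2,5) rreal r(1) unfolding W_def realvec_def by (simp_all add: bform_linear)
  then have aw: "orthonormal_pair d a w"
    unfolding w_def N_def using orthonormal_pair_normalize O(1,3) WW by blast
  have "orientation d a w = (orientation d a b + \<epsilon> * orientation d a r) / N"
    unfolding orientation_def w_def W_def using N by (simp add: field_simps)
  then have "orientation d a w > 0" using eps(3) N by simp
  moreover have "bform d w c1 = \<gamma> / N"
    unfolding w_def W_def using c1(3) r(2) by (simp add: bform_divide_left bform_linear bform_sym[of d r c1])
  moreover have "(\<lambda>i. real_wedge d a b c2 i - N * real_wedge d a w c2 i) = (\<lambda>i. \<epsilon> * v i)"
    using real_wedge_tilt[OF Nw] r(3) unfolding v_def \<alpha>_def rr_def by simp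
  moreover have "bform d (\<lambda>i. \<epsilon> * v i) (\<lambda>i. \<epsilon> * v i) = \<epsilon>\<^sup>2 * bform d v v"
    by (simp add: bform_linear power2_eq_square)
  then have "(c2, \<lambda>i. \<epsilon> * v i) \<in> forward_tube d"
    using vv eps(1) unfolding forward_tube_def orientation_def by (cases "\<epsilon> = 0") (simp_all add: algebra_simps)
  ultimately show ?thesis using that aw N by simp
qed

section \<open>Small hyperbolic angles\<close>

lemma sinh_over_id_tendsto: "((\<lambda>x. sinh x / x) \<longlongrightarrow> 1) (at_right (0::real))"
proof -
  have "(sinh has_field_derivative cosh 0 * 1) (at (0::real) within {0<..})"
    by (rule has_field_derivative_sinh[OF DERIV_ident])
  then show ?thesis unfolding has_field_derivative_iff by simp
qed

lemma exists_sinh_cosh_ratio: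
  fixes s l :: real
  assumes "0 < s" "s < l"
  obtains t where "t > 0" "sinh t = s / sqrt (l\<^sup>2 - s\<^sup>2)" "cosh t = l / sqrt (l\<^sup>2 - s\<^sup>2)"
proof
  have pos: "l\<^sup>2 - s\<^sup>2 > 0" using assms by (simp add: power_strict_mono)
  define t where "t = arsinh (s / sqrt (l\<^sup>2 - s\<^sup>2))"
  show "sinh t = s / sqrt (l\<^sup>2 - s\<^sup>2)" unfolding t_def by simp
  show "t > 0" unfolding t_def using assms pos by simp
  have "(s / sqrt (l\<^sup>2 - s\<^sup>2))\<^sup>2 + 1 = (l / sqrt (l\<^sup>2 - s\<^sup>2))\<^sup>2"
    using pos by (simp add: power_divide field_simps)
  then show "cosh t = l / sqrt (l\<^sup>2 - s\<^sup>2)"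
    unfolding t_def cosh_arsinh_real using assms pos by simp
qed

text \<open>\<open>l / \<beta> - 1 = s\<^sup>2 / (\<beta> (l + \<beta>))\<close> with \<open>\<beta> = sqrt (l\<^sup>2 - s\<^sup>2)\<close> is of second order when \<open>s = O(\<delta>)\<close>.\<close>
lemma tendsto_ratio_sqrt_minus_one_over_id:
  fixes l s :: "real \<Rightarrow> real"
  assumes l: "(l \<longlongrightarrow> l0) (at_right 0)" "l0 > 0"
    and s: "(s \<longlongrightarrow> 0) (at_right 0)" "((\<lambda>\<delta>. s \<delta> / \<delta>) \<longlongrightarrow> s1) (at_right 0)"
  shows "((\<lambda>\<delta>. (l \<delta> / sqrt ((l \<delta>)\<^sup>2 - (s \<delta>)\<^sup>2) - 1) / \<delta>) \<longlongrightarrow> 0) (at_right 0)"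
proof -
  define \<beta> where "\<beta> = (\<lambda>\<delta>. sqrt ((l \<delta>)\<^sup>2 - (s \<delta>)\<^sup>2))"
  have "(\<beta> \<longlongrightarrow> sqrt (l0\<^sup>2 - 0\<^sup>2)) (at_right 0)" unfolding \<beta>_def by (intro tendsto_intros l s)
  then have \<beta>: "(\<beta> \<longlongrightarrow> l0) (at_right 0)" using l(2) by simp
  have diff: "((\<lambda>\<delta>. (l \<delta>)\<^sup>2 - (s \<delta>)\<^sup>2) \<longlongrightarrow> l0\<^sup>2 - 0\<^sup>2) (at_right 0)" by (intro tendsto_intros l s)
  have "\<forall>\<^sub>F \<delta> in at_right 0. (l \<delta>)\<^sup>2 - (s \<delta>)\<^sup>2 > 0" "\<forall>\<^sub>F \<delta> in at_right 0. l \<delta> > 0"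
    using order_tendstoD(1)[OF diff, of 0] order_tendstoD(1)[OF l(1), of 0] l(2) by simp_all
  moreover have "\<forall>\<^sub>F \<delta> in at_right (0::real). \<delta> > 0" by (simp add: eventually_at_right_less)
  ultimately have "\<forall>\<^sub>F \<delta> in at_right 0.
      s \<delta> * (s \<delta> / \<delta>) / (\<beta> \<delta> * (l \<delta> + \<beta> \<delta>)) = (l \<delta> / \<beta> \<delta> - 1) / \<delta>"
  proof eventually_elim
    case (elim \<delta>)
    then have b: "\<beta> \<delta> > 0" "(\<beta> \<delta>)\<^sup>2 = (l \<delta>)\<^sup>2 - (s \<delta>)\<^sup>2" unfolding \<beta>_def by simp_all
    have lb: "l \<delta> + \<beta> \<delta> > 0" using b elim by simp
    have "l \<delta> / \<beta> \<delta> - 1 = (l \<delta> - \<beta> \<delta>) / \<beta> \<delta>" using b by (simp add: field_simps)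
    also have "l \<delta> - \<beta> \<delta> = ((l \<delta>)\<^sup>2 - (\<beta> \<delta>)\<^sup>2) / (l \<delta> + \<beta> \<delta>)"
      using lb by (simp add: field_simps power2_eq_square)
    also have "(l \<delta>)\<^sup>2 - (\<beta> \<delta>)\<^sup>2 = (s \<delta>)\<^sup>2" using b by simp
    finally have eq: "l \<delta> / \<beta> \<delta> - 1 = (s \<delta>)\<^sup>2 / (l \<delta> + \<beta> \<delta>) / \<beta> \<delta>" .
    show ?case unfolding eq using b lb elim by (simp add: field_simps power2_eq_square)
  qed
  moreover have "((\<lambda>\<delta>. s \<delta> * (s \<delta> / \<delta>) / (\<beta> \<delta> * (l \<delta> + \<beta> \<delta>))) \<longlongrightarrow> 0 * s1 / (l0 * (l0 + l0))) (at_right 0)"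
    using l(2) by (intro tendsto_intros l s \<beta>) auto
  ultimately have "((\<lambda>\<delta>. (l \<delta> / \<beta> \<delta> - 1) / \<delta>) \<longlongrightarrow> 0 * s1 / (l0 * (l0 + l0))) (at_right 0)"
    by (auto intro: Lim_transform_eventually)
  then show ?thesis unfolding \<beta>_def by simp
qed

lemma hyperbolic_angle_limits:
  fixes \<gamma> N k :: real and lam bet sh ch :: "real \<Rightarrow> real"
  assumes \<gamma>: "\<gamma> > 0" and N: "N > 0"
    and lam: "lam = (\<lambda>\<delta>. \<gamma> / N + (cosh \<delta> - 1) * k)"
    and bet: "bet = (\<lambda>\<delta>. sqrt ((lam \<delta>)\<^sup>2 - (\<gamma> * sinh \<delta>)\<^sup>2))"
    and sh: "sh = (\<lambda>\<delta>. \<gamma> * sinh \<delta> / bet \<delta>)" and ch: "ch = (\<lambda>\<delta>. lam \<delta> / bet \<delta>)"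
  shows "((\<lambda>\<delta>. sh \<delta> / \<delta>) \<longlongrightarrow> N) (at_right 0)" "(sh \<longlongrightarrow> 0) (at_right 0)"
    "(ch \<longlongrightarrow> 1) (at_right 0)" "((\<lambda>\<delta>. (ch \<delta> - 1) / \<delta>) \<longlongrightarrow> 0) (at_right 0)"
    "\<forall>\<^sub>F \<delta> in at_right 0. \<gamma> * sinh \<delta> < lam \<delta>"
proof -
  have sinh0: "(sinh \<longlongrightarrow> 0) (at_right (0::real))" and cosh0: "(cosh \<longlongrightarrow> 1) (at_right (0::real))"
    using tendsto_sinh[OF tendsto_ident_at, of "0::real" "{0<..}"]
      tendsto_cosh[OF tendsto_ident_at, of "0::real" "{0<..}"] by simp_all
  have gN: "\<gamma> / N > 0" using \<gamma> N by simp
  have lam0: "(lam \<longlongrightarrow> \<gamma> / N) (at_right 0)"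
    unfolding lam using cosh0 by (auto intro!: tendsto_eq_intros)
  have "(bet \<longlongrightarrow> sqrt ((\<gamma> / N)\<^sup>2 - (\<gamma> * 0)\<^sup>2)) (at_right 0)"
    unfolding bet by (intro tendsto_intros lam0 sinh0)
  then have bet0: "(bet \<longlongrightarrow> \<gamma> / N) (at_right 0)" using \<gamma> N by simp
  have "((\<lambda>\<delta>. \<gamma> * (sinh \<delta> / \<delta>) / bet \<delta>) \<longlongrightarrow> \<gamma> * 1 / (\<gamma> / N)) (at_right 0)"
    using gN by (intro tendsto_intros sinh_over_id_tendsto bet0) auto
  then show "((\<lambda>\<delta>. sh \<delta> / \<delta>) \<longlongrightarrow> N) (at_right 0)" unfolding sh using \<gamma> by (simp add: mult.commute)
  have "(sh \<longlongrightarrow> \<gamma> * 0 / (\<gamma> / N)) (at_right 0)"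
    unfolding sh using gN by (intro tendsto_intros sinh0 bet0) auto
  then show "(sh \<longlongrightarrow> 0) (at_right 0)" by simp
  have "(ch \<longlongrightarrow> (\<gamma> / N) / (\<gamma> / N)) (at_right 0)"
    unfolding ch using gN by (intro tendsto_intros lam0 bet0) auto
  then show "(ch \<longlongrightarrow> 1) (at_right 0)" using \<gamma> N by simp
  have "((\<lambda>\<delta>. \<gamma> * sinh \<delta>) \<longlongrightarrow> \<gamma> * 0) (at_right 0)" "((\<lambda>\<delta>. \<gamma> * (sinh \<delta> / \<delta>)) \<longlongrightarrow> \<gamma> * 1) (at_right 0)"
    by (intro tendsto_intros sinh0 sinh_over_id_tendsto)+
  from tendsto_ratio_sqrt_minus_one_over_id[OF lam0 gN, of "\<lambda>\<delta>. \<gamma> * sinh \<delta>" \<gamma>] this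
  show "((\<lambda>\<delta>. (ch \<delta> - 1) / \<delta>) \<longlongrightarrow> 0) (at_right 0)" unfolding ch bet by simp
  have "((\<lambda>\<delta>. lam \<delta> - \<gamma> * sinh \<delta>) \<longlongrightarrow> \<gamma> / N - \<gamma> * 0) (at_right 0)"
    by (intro tendsto_intros lam0 sinh0)
  then show "\<forall>\<^sub>F \<delta> in at_right 0. \<gamma> * sinh \<delta> < lam \<delta>"
    using order_tendstoD(1)[of _ "\<gamma> / N" _ 0] gN by fastforce
qed

lemma tendsto_real_wedge:
  assumes "\<And>j. ((\<lambda>t. x t j) \<longlongrightarrow> x0 j) F"
  shows "((\<lambda>t. real_wedge d a b (x t) i) \<longlongrightarrow> real_wedge d a b x0 i) F"
  unfolding real_wedge_def by (intro tendsto_intros tendsto_bform assms)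

lemma tendsto_real_plane_proj:
  assumes "\<And>j. ((\<lambda>t. x t j) \<longlongrightarrow> x0 j) F"
  shows "((\<lambda>t. real_plane_proj d a b (x t) i) \<longlongrightarrow> real_plane_proj d a b x0 i) F"
  unfolding real_plane_proj_def by (intro tendsto_intros tendsto_bform assms)

text \<open>Real part and imaginary part divided by \<open>\<delta>\<close> of \<open>exp (-\<i> \<delta>\<^sub>1 \<ell>(a\<and>w)) exp (\<i> \<delta> \<ell>(a\<and>b)) c\<close>
  for \<open>sinh \<delta>\<^sub>1 = sh \<delta> \<approx> N \<delta>\<close> and \<open>cosh \<delta>\<^sub>1 = ch \<delta>\<close>.\<close>
lemma hyp_rot_hyp_rot_tendsto:
  fixes sh ch :: "real \<Rightarrow> real" and N :: real
  assumes sh: "((\<lambda>\<delta>. sh \<delta> / \<delta>) \<longlongrightarrow> N) (at_right 0)" "(sh \<longlongrightarrow> 0) (at_right 0)"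
    and ch: "(ch \<longlongrightarrow> 1) (at_right 0)" "((\<lambda>\<delta>. (ch \<delta> - 1) / \<delta>) \<longlongrightarrow> 0) (at_right 0)"
    and Z: "Z = (\<lambda>\<delta>. hyp_rot d a w (- sh \<delta>) (ch \<delta>) (hyp_rot d a b (sinh \<delta>) (cosh \<delta>) (c, \<lambda>_. 0)))"
  shows "((\<lambda>\<delta>. fst (Z \<delta>) j) \<longlongrightarrow> c j) (at_right 0)"
    "((\<lambda>\<delta>. snd (Z \<delta>) j / \<delta>) \<longlongrightarrow> real_wedge d a b c j - N * real_wedge d a w c j) (at_right 0)"
proof -
  define x where "x = (\<lambda>\<delta> i. c i + (cosh \<delta> - 1) * real_plane_proj d a b c i)"
  define y where "y = (\<lambda>\<delta> i. sinh \<delta> * real_wedge d a b c i)"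
  have inner: "hyp_rot d a b (sinh \<delta>) (cosh \<delta>) (c, \<lambda>_. 0) = (x \<delta>, y \<delta>)" for \<delta>
    unfolding hyp_rot_real x_def y_def by simp
  have fst: "fst (Z \<delta>) j = x \<delta> j + sh \<delta> * real_wedge d a w (y \<delta>) j + (ch \<delta> - 1) * real_plane_proj d a w (x \<delta>) j"
    for \<delta> unfolding Z inner by (simp add: hyp_rot_def)
  have snd: "snd (Z \<delta>) j / \<delta> = sinh \<delta> / \<delta> * real_wedge d a b c j - sh \<delta> / \<delta> * real_wedge d a w (x \<delta>) j
      + (ch \<delta> - 1) / \<delta> * real_plane_proj d a w (y \<delta>) j" for \<delta>
  proof (cases "\<delta> = 0")
    case False
    then show ?thesis unfolding Z inner by (simp add: hyp_rot_def y_def field_simps)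
  qed simp
  have sinh0: "(sinh \<longlongrightarrow> 0) (at_right (0::real))" and cosh0: "(cosh \<longlongrightarrow> 1) (at_right (0::real))"
    using tendsto_sinh[OF tendsto_ident_at, of "0::real" "{0<..}"]
      tendsto_cosh[OF tendsto_ident_at, of "0::real" "{0<..}"] by simp_all
  have "((\<lambda>\<delta>. x \<delta> i) \<longlongrightarrow> c i + (1 - 1) * real_plane_proj d a b c i) (at_right 0)" for i
    unfolding x_def by (intro tendsto_intros cosh0)
  then have x: "((\<lambda>\<delta>. x \<delta> i) \<longlongrightarrow> c i) (at_right 0)" for i by simp
  have "((\<lambda>\<delta>. y \<delta> i) \<longlongrightarrow> 0 * real_wedge d a b c i) (at_right 0)" for i
    unfolding y_def by (intro tendsto_intros sinh0)
  then have y: "((\<lambda>\<delta>. y \<delta> i) \<longlongrightarrow> 0) (at_right 0)" for i by simp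
  have "((\<lambda>\<delta>. fst (Z \<delta>) j) \<longlongrightarrow> c j + 0 * real_wedge d a w (\<lambda>_. 0) j + (1 - 1) * real_plane_proj d a w c j)
      (at_right 0)"
    unfolding fst by (intro tendsto_intros tendsto_real_wedge tendsto_real_plane_proj x y sh(2) ch(1))
  then show "((\<lambda>\<delta>. fst (Z \<delta>) j) \<longlongrightarrow> c j) (at_right 0)" by simp
  have "((\<lambda>\<delta>. snd (Z \<delta>) j / \<delta>) \<longlongrightarrow> 1 * real_wedge d a b c j - N * real_wedge d a w c j
      + 0 * real_plane_proj d a w (\<lambda>_. 0) j) (at_right 0)"
    unfolding snd
    by (intro tendsto_intros tendsto_real_wedge tendsto_real_plane_proj x y sinh_over_id_tendsto sh(1) ch(2))
  then show "((\<lambda>\<delta>. snd (Z \<delta>) j / \<delta>) \<longlongrightarrow> real_wedge d a b c j - N * real_wedge d a w c j) (at_right 0)"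
    by simp
qed

lemma eventually_hyp_rot_forward_tube:
  fixes sh ch :: "real \<Rightarrow> real" and N :: real
  assumes sh: "((\<lambda>\<delta>. sh \<delta> / \<delta>) \<longlongrightarrow> N) (at_right 0)" "(sh \<longlongrightarrow> 0) (at_right 0)"
    and ch: "(ch \<longlongrightarrow> 1) (at_right 0)" "((\<lambda>\<delta>. (ch \<delta> - 1) / \<delta>) \<longlongrightarrow> 0) (at_right 0)"
    and tangent: "(c, \<lambda>i. real_wedge d a b c i - N * real_wedge d a w c i) \<in> forward_tube d"
  shows "\<forall>\<^sub>F \<delta> in at_right 0.
    hyp_rot d a w (- sh \<delta>) (ch \<delta>) (hyp_rot d a b (sinh \<delta>) (cosh \<delta>) (c, \<lambda>_. 0)) \<in> forward_tube d"
proof -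
  define Z where "Z = (\<lambda>\<delta>. hyp_rot d a w (- sh \<delta>) (ch \<delta>) (hyp_rot d a b (sinh \<delta>) (cosh \<delta>) (c, \<lambda>_. 0)))"
  define L where "L = (\<lambda>i. real_wedge d a b c i - N * real_wedge d a w c i)"
  define Yd where "Yd = (\<lambda>\<delta> j. snd (Z \<delta>) j / \<delta>)"
  note lim = hyp_rot_hyp_rot_tendsto[OF sh ch Z_def]
  have Yd: "((\<lambda>\<delta>. Yd \<delta> j) \<longlongrightarrow> L j) (at_right 0)" for j unfolding Yd_def L_def using lim(2) .
  have "bform d L L > 0" "orientation d L c > 0" using tangent unfolding forward_tube_def L_def by auto
  moreover have "((\<lambda>\<delta>. bform d (Yd \<delta>) (Yd \<delta>)) \<longlongrightarrow> bform d L L) (at_right 0)"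
    by (intro tendsto_bform Yd)
  moreover have "((\<lambda>\<delta>. orientation d (Yd \<delta>) (fst (Z \<delta>))) \<longlongrightarrow> orientation d L c) (at_right 0)"
    unfolding orientation_def by (intro tendsto_intros Yd lim(1))
  ultimately have "\<forall>\<^sub>F \<delta> in at_right 0. bform d (Yd \<delta>) (Yd \<delta>) > 0"
    "\<forall>\<^sub>F \<delta> in at_right 0. orientation d (Yd \<delta>) (fst (Z \<delta>)) > 0"
    by (auto dest: order_tendstoD(1))
  moreover have "\<forall>\<^sub>F \<delta> in at_right (0::real). \<delta> > 0" by (simp add: eventually_at_right_less)
  ultimately have "\<forall>\<^sub>F \<delta> in at_right 0. Z \<delta> \<in> forward_tube d"
  proof eventually_elim
    case (elim \<delta>)
    then have "snd (Z \<delta>) = (\<lambda>j. \<delta> * Yd \<delta> j)" unfolding Yd_def by auto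
    moreover have "bform d (\<lambda>j. \<delta> * Yd \<delta> j) (\<lambda>j. \<delta> * Yd \<delta> j) = \<delta> * \<delta> * bform d (Yd \<delta>) (Yd \<delta>)"
      by (simp add: bform_linear)
    moreover have "orientation d (\<lambda>j. \<delta> * Yd \<delta> j) (fst (Z \<delta>)) = \<delta> * orientation d (Yd \<delta>) (fst (Z \<delta>))"
      unfolding orientation_def by (simp add: algebra_simps)
    ultimately show ?case using elim unfolding forward_tube_def by (cases "Z \<delta>") simp
  qed
  then show ?thesis unfolding Z_def .
qed

lemma hyp_rot_hyp_rot_real:
  assumes ab: "orthonormal_pair d a b" and aw: "orthonormal_pair d a w"
    and c: "bform d a c = 0" "bform d b c = \<gamma>"
    and angle: "sh * (bform d w c + (ch' - 1) * \<gamma> * bform d w b) = ch * \<gamma> * s"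
  shows "snd (hyp_rot d a w (- sh) ch (hyp_rot d a b s ch' (c, \<lambda>_. 0))) = (\<lambda>_. 0)"
proof -
  note O = orthonormal_pairD[OF ab] orthonormal_pairD[OF aw]
  have "snd (hyp_rot d a w (- sh) ch (hyp_rot d a b s ch' (c, \<lambda>_. 0)))
      = (\<lambda>i. (ch * \<gamma> * s - sh * (bform d w c + (ch' - 1) * \<gamma> * bform d w b)) * a i)"
    using O c by (simp add: hyp_rot_real hyp_rot_def real_wedge_def real_plane_proj_def bform_linear
        bform_sym[of d w a] fun_eq_iff algebra_simps)
  then show ?thesis using angle by simp
qed

lemma bform_of_re_im_self:
  "bform d (of_re_im (X, Y)) (of_re_im (X, Y))
     = complex_of_real (bform d X X - bform d Y Y) + \<i> * complex_of_real (2 * bform d X Y)"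
  unfolding bform_def of_re_im_def
  by (simp add: sum_distrib_left sum_subtractf sum.distrib[symmetric] algebra_simps)

lemma of_re_im_support:
  assumes "\<forall>j>d. of_re_im (X, Y) j = 0"
  shows "X \<in> realvec d" "Y \<in> realvec d"
  using assms unfolding of_re_im_def realvec_def by (auto simp: complex_eq_iff)

lemma word_act_split_angle:
  assumes ab: "orthonormal_pair d a b" and aw: "orthonormal_pair d a w" and \<rho>: "\<rho> \<noteq> 0"
    and z: "\<forall>j>d. z j = 0"
  shows "word_act d [(\<tau> - \<i> * complex_of_real (\<delta> / \<rho>), smult_mat (complex_of_real \<rho>) (ell d a b)),
      (\<i> * complex_of_real \<delta>1, ell d a w)]
      (plane_rot d a w (\<i> * complex_of_real (- \<delta>1)) (plane_rot d a b (\<i> * complex_of_real \<delta>) z))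
    = word_act d [(\<tau>, smult_mat (complex_of_real \<rho>) (ell d a b))] z"
proof -
  define R where "R = plane_rot d a w (\<i> * complex_of_real (- \<delta>1)) (plane_rot d a b (\<i> * complex_of_real \<delta>) z)"
  have "\<forall>j>d. R j = 0" unfolding R_def using plane_rot_support[OF ab(1) z] by (rule plane_rot_support[OF aw(1)])
  then have "word_act d [(\<tau> - \<i> * complex_of_real (\<delta> / \<rho>), smult_mat (complex_of_real \<rho>) (ell d a b)),
      (\<i> * complex_of_real \<delta>1, ell d a w)] R
    = plane_rot d a b ((\<tau> - \<i> * complex_of_real (\<delta> / \<rho>)) * complex_of_real \<rho>)
        (plane_rot d a w (\<i> * complex_of_real \<delta>1) R)"
    using plane_rot_support[OF aw(1)]
    by (simp add: mvec_mexp_ell[OF aw(1)] smult_mat_smult_mat mvec_mexp_ell[OF ab(1)])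
  also have "\<dots> = plane_rot d a b (\<tau> * complex_of_real \<rho>) z"
  proof -
    have "complex_of_real (\<delta> / \<rho>) * complex_of_real \<rho> = complex_of_real \<delta>"
      using \<rho> by (metis of_real_mult nonzero_divide_eq_eq)
    then have angle: "(\<tau> - \<i> * complex_of_real (\<delta> / \<rho>)) * complex_of_real \<rho> + \<i> * complex_of_real \<delta>
        = \<tau> * complex_of_real \<rho>"
      unfolding left_diff_distrib mult.assoc by simp
    have "\<i> * complex_of_real \<delta>1 + \<i> * complex_of_real (- \<delta>1) = 0" by simp
    then show ?thesis
      unfolding R_def plane_rot_add[OF aw(1)] by (simp only: plane_rot_zero plane_rot_add[OF ab(1)] angle)
  qed
  finally show ?thesis unfolding R_def using word_act_ell[OF ab(1) z] by simp
qed

text \<open>The factorization \<open>exp (\<tau> \<rho> \<ell>(a\<and>b)) = exp ((\<tau> \<rho> - \<i> \<delta>) \<ell>(a\<and>b)) exp (\<i> \<delta>\<^sub>1 \<ell>(a\<and>w)) R\<close>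
  with \<open>R = exp (-\<i> \<delta>\<^sub>1 \<ell>(a\<and>w)) exp (\<i> \<delta> \<ell>(a\<and>b))\<close>, when R maps \<open>c\<^sub>1\<close> to a real point and \<open>c\<^sub>2\<close>
  into the tube.\<close>
lemma exp_Tplus2_rep_via_tube:
  assumes ab: "orthonormal_pair d a b" "orientation d a b > 0"
    and aw: "orthonormal_pair d a w" "orientation d a w > 0"
    and \<rho>: "\<rho> > 0" and \<delta>: "0 < \<delta>" "\<delta> < \<rho> * Im \<tau>" and \<delta>1: "\<delta>1 > 0"
    and c: "c1 \<in> Xd d" "c2 \<in> Xd d"
    and Z1: "plane_rot d a w (\<i> * complex_of_real (- \<delta>1)) (plane_rot d a b (\<i> * complex_of_real \<delta>) (cvec c1))
      = cvec x1"
    and Z2: "plane_rot d a w (\<i> * complex_of_real (- \<delta>1)) (plane_rot d a b (\<i> * complex_of_real \<delta>) (cvec c2))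
      = of_re_im p"
    and tube: "p \<in> forward_tube d"
  shows "Tplus2_rep d (word_act d [(\<tau>, smult_mat (complex_of_real \<rho>) (ell d a b))] (cvec c1))
    (word_act d [(\<tau>, smult_mat (complex_of_real \<rho>) (ell d a b))] (cvec c2))"
proof -
  obtain X Y where p: "p = (X, Y)" by fastforce
  define R where "R = (\<lambda>z. plane_rot d a w (\<i> * complex_of_real (- \<delta>1)) (plane_rot d a b (\<i> * complex_of_real \<delta>) z))"
  have supp: "\<forall>j>d. cvec c j = 0" "\<forall>j>d. R (cvec c) j = 0" "bform d (R (cvec c)) (R (cvec c)) = 1"
    if "c \<in> Xd d" for c
    using that cvec_support bform_cvec_Xd plane_rot_support[OF ab(1)] plane_rot_support[OF aw(1)]
    unfolding R_def Xd_def by (auto simp: bform_plane_rot_self[OF ab(1)] bform_plane_rot_self[OF aw(1)])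
  have "\<rho> \<noteq> 0" using \<rho> by simp
  note split = word_act_split_angle[OF ab(1) aw(1) this supp(1), of _ \<tau> \<delta> \<delta>1]
  have "\<delta> / \<rho> < Im \<tau>" using \<delta> \<rho> by (simp add: divide_less_eq mult.commute)
  then have word1: "G0plus_word d [(\<tau> - \<i> * complex_of_real (\<delta> / \<rho>), smult_mat (complex_of_real \<rho>) (ell d a b)),
      (\<i> * complex_of_real \<delta>1, ell d a w)]"
    unfolding G0plus_word_def using smult_ell_in_Cplus[OF \<rho> ab] ell_in_Cplus[OF aw] \<delta>1 by simp
  have "\<forall>j>d. cvec x1 j = 0" "bform d (cvec x1) (cvec x1) = 1"
    using supp[OF c(1)] Z1 unfolding R_def by simp_all
  then have x1: "x1 \<in> Xd d" unfolding Xd_def realvec_def cvec_def by (simp add: bform_cvec[unfolded cvec_def])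
  have supp2: "\<forall>j>d. of_re_im (X, Y) j = 0" and XY: "bform d (of_re_im (X, Y)) (of_re_im (X, Y)) = 1"
    using supp[OF c(2)] Z2 unfolding R_def p by simp_all
  have "X \<in> realvec d" "Y \<in> realvec d" using of_re_im_support[OF supp2] by simp_all
  moreover have "bform d X X - bform d Y Y = 1" "bform d X Y = 0"
    using XY by (simp_all add: bform_of_re_im_self complex_eq_iff)
  ultimately obtain ts2 c2' where word2: "G0plus_word d ts2" and c2': "c2' \<in> Xd d"
    and tube_rep: "word_act d ts2 (cvec c2') = of_re_im (X, Y)"
    using forward_tube_word_act tube unfolding p by metis
  show ?thesis unfolding Tplus2_rep_def
    using word1 word2 x1 c2' split[OF c(1)] split[OF c(2)] Z1 Z2 tube_rep unfolding p by metis
qed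

lemma exp_Tplus2_rep:
  assumes \<tau>: "Im \<tau> > 0" and M: "M \<in> Cplus d"
    and c: "c1 \<in> Xd d" "c2 \<in> Xd d" and far: "\<bar>bform d c1 c2\<bar> > 1"
  shows "Tplus2_rep d (word_act d [(\<tau>, M)] (cvec c1)) (word_act d [(\<tau>, M)] (cvec c2))"
proof -
  obtain \<rho> a0 b0 where \<rho>: "\<rho> > 0" and a0b0: "orthonormal_pair d a0 b0" "orientation d a0 b0 > 0"
    and M: "M = smult_mat (complex_of_real \<rho>) (ell d a0 b0)"
    using M by (rule CplusE)
  obtain a b \<gamma> where ab: "orthonormal_pair d a b" "orientation d a b > 0" and ell: "ell d a b = ell d a0 b0"
    and c1: "bform d a c1 = 0" "bform d b c1 = \<gamma>" and \<gamma>: "\<gamma> > 0"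
    using rotate_pair_orthogonal[OF a0b0 c(1)] by blast
  obtain w N where aw: "orthonormal_pair d a w" "orientation d a w > 0" and N: "N > 0"
    and wc1: "bform d w c1 = \<gamma> / N"
    and tangent: "(c2, \<lambda>i. real_wedge d a b c2 i - N * real_wedge d a w c2 i) \<in> forward_tube d"
    using second_plane_exists[OF ab c(1) c1 c(2) far] by blast
  \<comment> \<open>lam is \<open>(w, Re (exp (\<i> \<delta> \<ell>(a\<and>b)) c1))\<close>, and \<open>tanh \<delta>1 = \<gamma> sinh \<delta> / lam\<close> makes R c1 real\<close>
  define lam where "lam = (\<lambda>\<delta>. \<gamma> / N + (cosh \<delta> - 1) * (\<gamma> * bform d w b))"
  define bet where "bet = (\<lambda>\<delta>. sqrt ((lam \<delta>)\<^sup>2 - (\<gamma> * sinh \<delta>)\<^sup>2))"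
  define sh where "sh = (\<lambda>\<delta>. \<gamma> * sinh \<delta> / bet \<delta>)"
  define ch where "ch = (\<lambda>\<delta>. lam \<delta> / bet \<delta>)"
  note lim = hyperbolic_angle_limits[OF \<gamma> N lam_def bet_def sh_def ch_def]
  have "\<forall>\<^sub>F \<delta> in at_right 0. \<delta> < \<rho> * Im \<tau>"
    using \<rho> \<tau> by (intro order_tendstoD(2)[OF tendsto_ident_at]) simp
  then have "\<forall>\<^sub>F \<delta> in at_right 0. 0 < \<delta> \<and> \<delta> < \<rho> * Im \<tau> \<and> \<gamma> * sinh \<delta> < lam \<delta> \<and>
      hyp_rot d a w (- sh \<delta>) (ch \<delta>) (hyp_rot d a b (sinh \<delta>) (cosh \<delta>) (c2, \<lambda>_. 0)) \<in> forward_tube d"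
    using lim(5) eventually_hyp_rot_forward_tube[OF lim(1-4) tangent] eventually_at_right_less[of 0]
    by eventually_elim blast
  then obtain \<delta> where \<delta>: "0 < \<delta>" "\<delta> < \<rho> * Im \<tau>" "\<gamma> * sinh \<delta> < lam \<delta>"
    and tube: "hyp_rot d a w (- sh \<delta>) (ch \<delta>) (hyp_rot d a b (sinh \<delta>) (cosh \<delta>) (c2, \<lambda>_. 0)) \<in> forward_tube d"
    using eventually_happens'[OF trivial_limit_at_right_real] by blast
  have "0 < \<gamma> * sinh \<delta>" using \<gamma> \<delta>(1) by simp
  then obtain \<delta>1 where \<delta>1: "\<delta>1 > 0" "sinh \<delta>1 = sh \<delta>" "cosh \<delta>1 = ch \<delta>"
    using exists_sinh_cosh_ratio[OF _ \<delta>(3)] unfolding sh_def ch_def bet_def by blast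
  have rot: "plane_rot d a w (\<i> * complex_of_real (- \<delta>1)) (plane_rot d a b (\<i> * complex_of_real \<delta>) (cvec c))
      = of_re_im (hyp_rot d a w (- sh \<delta>) (ch \<delta>) (hyp_rot d a b (sinh \<delta>) (cosh \<delta>) (c, \<lambda>_. 0)))" for c
    unfolding cvec_eq_of_re_im plane_rot_ii_of_re_im \<delta>1(2,3)[symmetric] by simp
  have "snd (hyp_rot d a w (- sh \<delta>) (ch \<delta>) (hyp_rot d a b (sinh \<delta>) (cosh \<delta>) (c1, \<lambda>_. 0))) = (\<lambda>_. 0)"
    using \<gamma> by (intro hyp_rot_hyp_rot_real[OF ab(1) aw(1) c1]) (simp add: wc1 sh_def ch_def lam_def)
  then have "plane_rot d a w (\<i> * complex_of_real (- \<delta>1)) (plane_rot d a b (\<i> * complex_of_real \<delta>) (cvec c1))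
      = cvec (fst (hyp_rot d a w (- sh \<delta>) (ch \<delta>) (hyp_rot d a b (sinh \<delta>) (cosh \<delta>) (c1, \<lambda>_. 0))))"
    unfolding rot by (simp add: of_re_im_def cvec_def)
  from exp_Tplus2_rep_via_tube[OF ab aw \<rho> \<delta>(1,2) \<delta>1(1) c this rot[of c2]] tube
  show ?thesis unfolding M ell[symmetric] by simp
qed

lemma G0plus_Tplus2:
  assumes A: "A \<in> G0plus d" and c: "c1 \<in> Xd d" "c2 \<in> Xd d" and far: "\<bar>bform d c1 c2\<bar> > 1"
  shows "[mvec d A (cvec c1), mvec d A (cvec c2)] \<in> Tplus d 2"
proof -
  obtain ts where word: "G0plus_word d ts" and A: "A = word_mat d ts"
    using A G0plus_iff_word by blast
  then obtain ts0 \<tau> M where ts: "ts = ts0 @ [(\<tau>, M)]"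
    unfolding G0plus_word_def by (metis rev_exhaust surj_pair)
  have last: "Im \<tau> > 0" "M \<in> Cplus d" and prefix: "\<forall>(t, M) \<in> set ts0. Im t > 0 \<and> M \<in> Cplus d"
    using word unfolding G0plus_word_def ts by auto
  have "mvec d A (cvec c) = word_act d ts0 (word_act d [(\<tau>, M)] (cvec c))" if "c \<in> Xd d" for c
  proof -
    have supp: "\<forall>j>d. cvec c j = 0" using that cvec_support unfolding Xd_def by blast
    show ?thesis unfolding A ts mvec_word_mat[OF supp] word_act_append ..
  qed
  then show ?thesis
    using Tplus2_rep_imp_Tplus[OF Tplus2_rep_word_act[OF prefix exp_Tplus2_rep[OF last c far]]] c by simp
qed

theorem lemma11:
  fixes d :: nat and c1 c2 :: "nat \<Rightarrow> real"
  assumes "d \<ge> 2"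
    and "c1 \<in> Xd d" and "c2 \<in> Xd d"
    and "\<bar>bform d c1 c2\<bar> > 1"
  shows "(\<forall>A \<in> G0plus d. [mvec d A (cvec c1), mvec d A (cvec c2)] \<in> Tplus d 2)
    \<and> (\<forall>A \<in> G0plus d. [mvec d A (cvec c1), mvec d A (cvec c2)] \<in> Tplus d 2
            \<and> (mvec d A (cvec c1), mvec d A (cvec c2)) \<in> T2_21 d)"
proof -
  have "\<bar>bform d c2 c1\<bar> > 1" using assms(4) by (simp add: bform_sym)
  then have "(mvec d A (cvec c1), mvec d A (cvec c2)) \<in> T2_21 d" if "A \<in> G0plus d" for A
    unfolding T2_21_def using G0plus_Tplus2[OF that assms(3,2)] by simp
  then show ?thesis using G0plus_Tplus2[OF _ assms(2-4)] by blast
qed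

end
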